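(* Let $P$ be a natural unit interval order on $[n]$ with Catalan path $C$, and let $\widetilde{C}$ be the reflection of $C$ about the line $y=n-x$ (which is again a Catalan path from $(0,0)$ to $(n,n)$). Let $\widetilde{P}$ be the natural unit interval order whose Catalan path is $\widetilde{C}$, and let $G=\mathrm{inc}(P)$, $\widetilde{G}=\mathrm{inc}(\widetilde{P})$. Then $X_G(\mathbf{x},t)=X_{\widetilde{G}}(\mathbf{x},t)$.
   Context: A natural unit interval order $P(m_1,\dots,m_{n-1})$ is defined for integers $m_1\le m_2\le\cdots\le m_{n-1}\le n$ with $m_i\ge i$ for all $i$: it is the poset on $[n]$ with $i<_P j$ iff $i<n$ and $j\in\{m_i+1,\dots,n\}$. Its incomparability graph $\mathrm{inc}(P)$ has vertex set $[n]$ and an edge $\{i,j\}$ ($i<j$) iff $j\le m_i$. The Catalan path of $P$ is the lattice path from $(0,0)$ to $(n,n)$ with unit north and east steps whose $i$-th east step lies on the line $y=m_i$ for $i=1,\dots,n-1$ and whose last east step lies on $y=n$; this gives a bijection between natural unit interval orders on $[n]$ and lattice paths from $(0,0)$ to $(n,n)$ staying weakly above $y=x$. For a graph $G$ with vertex set $V\subset\mathbb{P}$, the chromatic quasisymmetric function is $X_G(\mathbf{x},t)=\sum_\kappa t^{\mathrm{asc}(\kappa)}\mathbf{x}_\kappa$, summed over proper colorings $\kappa:V\to\mathbb{P}$, where $\mathbf{x}_\kappa=\prod_{v\in V}x_{\kappa(v)}$ and $\mathrm{asc}(\kappa)$ is the number of edges $\{i,j\}$ with $i<j$ and $\kappa(i)<\kappa(j)$.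 *)

theory Defs
  imports "HOL-Computational_Algebra.Polynomial"
begin

text \<open>A natural unit interval order P(m_1,...,m_{n-1}) on [n] = {1..n} is encoded by the
function m :: nat => nat, of which only the values m 1, ..., m (n-1) matter.\<close>

definition nuio :: "nat \<Rightarrow> (nat \<Rightarrow> nat) \<Rightarrow> bool" where
  "nuio n m \<longleftrightarrow>
     (\<forall>i. 1 \<le> i \<and> i < n \<longrightarrow> i \<le> m i \<and> m i \<le> n) \<and>
     (\<forall>i j. 1 \<le> i \<and> i \<le> j \<and> j < n \<longrightarrow> m i \<le> m j)"

definition nuio_less :: "nat \<Rightarrow> (nat \<Rightarrow> nat) \<Rightarrow> nat \<Rightarrow> nat \<Rightarrow> bool" where
  "nuio_less n m i j \<longleftrightarrow> 1 \<le> i \<and> i < n \<and> m i < j \<and> j \<le> n"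

definition inc_vertices :: "nat \<Rightarrow> nat set" where
  "inc_vertices n = {1..n}"

definition inc_edges :: "nat \<Rightarrow> (nat \<Rightarrow> nat) \<Rightarrow> nat set set" where
  "inc_edges n m = {{i, j} | i j. 1 \<le> i \<and> i < j \<and> j \<le> n \<and> j \<le> m i}"

text \<open>Lattice paths from (0,0) to (n,n) are lists of unit steps: True = north step,
False = east step. With the conventions m_0 = 0 and m_n = n, the Catalan path of P is
N^(m_1) E N^(m_2 - m_1) E ... N^(m_n - m_(n-1)) E, i.e. the i-th east step lies on y = m_i.\<close>

definition mext :: "nat \<Rightarrow> (nat \<Rightarrow> nat) \<Rightarrow> nat \<Rightarrow> nat" where
  "mext n m i = (if i = 0 then 0 else if i < n then m i else n)"

definition catalan_path :: "nat \<Rightarrow> (nat \<Rightarrow> nat) \<Rightarrow> bool list" where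
  "catalan_path n m =
     concat (map (\<lambda>i. replicate (mext n m i - mext n m (i - 1)) True @ [False]) [1..<n+1])"

text \<open>Reflection about the line y = n - x: the point (x,y) goes to (n-y, n-x); the path is
traversed backwards and north/east steps are exchanged.\<close>
definition reflect_path :: "bool list \<Rightarrow> bool list" where
  "reflect_path C = rev (map Not C)"

text \<open>Colorings are functions kappa : V -> positive integers, represented as functions
nat => nat that vanish outside V.\<close>

definition proper_coloring :: "nat set \<Rightarrow> nat set set \<Rightarrow> (nat \<Rightarrow> nat) \<Rightarrow> bool" where
  "proper_coloring V E \<kappa> \<longleftrightarrow>
     (\<forall>v\<in>V. 1 \<le> \<kappa> v) \<and> (\<forall>v. v \<notin> V \<longrightarrow> \<kappa> v = 0) \<and>
     (\<forall>e\<in>E. \<forall>i\<in>e. \<forall>j\<in>e. i \<noteq> j \<longrightarrow> \<kappa> i \<noteq> \<kappa> j)"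

definition asc :: "nat set set \<Rightarrow> (nat \<Rightarrow> nat) \<Rightarrow> nat" where
  "asc E \<kappa> = card {e\<in>E. \<exists>i j. e = {i, j} \<and> i < j \<and> \<kappa> i < \<kappa> j}"

text \<open>The monomial x_kappa = prod_v x_(kappa v) is x^alpha where alpha c = number of vertices
of color c. X_G(x,t) is represented by its coefficient map: the coefficient of x^alpha is
the polynomial in t given by the sum of t^asc(kappa) over proper colorings with x_kappa = x^alpha.\<close>

definition chrom_qsym :: "nat set \<Rightarrow> nat set set \<Rightarrow> (nat \<Rightarrow> nat) \<Rightarrow> int poly" where
  "chrom_qsym V E \<alpha> =
     (\<Sum>\<kappa> \<in> {\<kappa>. proper_coloring V E \<kappa> \<and> (\<forall>c. card {v\<in>V. \<kappa> v = c} = \<alpha> c)}.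
        monom 1 (asc E \<kappa>))"

end

(*
  Reflecting the Catalan path about y = n - x amounts to relabelling the vertices by
  v \<mapsto> n + 1 - v, so inc(P~) is the image of inc(P) under an order-reversing relabelling,
  which turns the ascents of a colouring into descents. Reversing the colours 1..N turns descents
  back into ascents, hence \<kappa> \<mapsto> flip N \<circ> \<kappa> \<circ> flip n matches the colourings counted by
  X_G~ at content \<alpha> with those counted by X_G at content \<alpha> \<circ> flip N, preserving ascents.
  It remains that X_G is symmetric (Shareshian-Wachs): swapping the colours c and c + 1 on the
  components of odd size of the subgraph induced by these two colours is an involution that keeps
  the number of ascents and changes the content by the transposition of c and c + 1; such
  transpositions generate the reversal of 1..N.
*)

theory Submission
  imports Defs "HOL-Combinatorics.Transposition"
begin

section \<open>The reflected order\<close>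

text \<open>C reaches height b before its a-th east step.\<close>

definition reaches_height :: "bool list \<Rightarrow> nat \<Rightarrow> nat \<Rightarrow> bool" where
  "reaches_height C a b \<longleftrightarrow>
     (\<exists>k\<le>length C. b \<le> count_list (take k C) True \<and> count_list (take k C) False < a)"

lemma count_list_replicate_True [simp]:
  "count_list (replicate d True) True = d" "count_list (replicate d True) False = 0"
  by (induction d) auto

lemma count_list_take_le: "count_list (take k C) x \<le> count_list C x"
  by (metis append_take_drop_id count_list_append le_add1)

lemma count_list_drop: "count_list (drop k C) x = count_list C x - count_list (take k C) x"
  by (metis append_take_drop_id count_list_append diff_add_inverse)

lemma count_list_map_Not: "count_list (map Not C) x = count_list C (\<not> x)"
  using count_list_map_conv[of Not C "\<not> x"] by (simp add: inj_def)

lemma mext_mono: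
  assumes "nuio n m" "1 \<le> i" "i \<le> n"
  shows "mext n m (i - 1) \<le> mext n m i"
  using assms unfolding nuio_def mext_def
  by (cases "i = 1") (auto simp: less_imp_diff_less)

abbreviation catalan_block :: "nat \<Rightarrow> (nat \<Rightarrow> nat) \<Rightarrow> nat \<Rightarrow> bool list" where
  "catalan_block n m i \<equiv> replicate (mext n m i - mext n m (i - 1)) True @ [False]"

lemma catalan_prefix_counts:
  assumes "nuio n m"
  shows "a \<le> n \<Longrightarrow>
    count_list (concat (map (catalan_block n m) [1..<a+1])) True = mext n m a \<and>
    count_list (concat (map (catalan_block n m) [1..<a+1])) False = a"
proof (induction a)
  case (Suc a)
  then have "mext n m a \<le> mext n m (Suc a)"
    using mext_mono[OF assms, of "Suc a"] by simp
  with Suc show ?case by simp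
qed (simp add: mext_def)

lemma catalan_path_counts:
  assumes "nuio n m"
  shows "count_list (catalan_path n m) True = n" "count_list (catalan_path n m) False = n"
  using catalan_prefix_counts[OF assms order_refl] by (simp_all add: catalan_path_def mext_def)

lemma reaches_height_catalan_path:
  assumes "nuio n m" "1 \<le> a" "a \<le> n"
  shows "reaches_height (catalan_path n m) a b \<longleftrightarrow> b \<le> mext n m a"
proof -
  define X where "X = concat (map (catalan_block n m) [1..<a]) @
                      replicate (mext n m a - mext n m (a - 1)) True"
  define Y where "Y = concat (map (catalan_block n m) [a+1..<n+1])"
  have "[1..<n+1] = [1..<a] @ a # [a+1..<n+1]"
    using assms upt_add_eq_append[of 1 a "n+1-a"] upt_conv_Cons[of a "n+1"] by simp
  then have path: "catalan_path n m = X @ False # Y"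
    by (simp add: catalan_path_def X_def Y_def)
  have "[1..<a] = [1..<(a-1)+1]" using assms by simp
  then have "count_list X True = mext n m a" "count_list X False = a - 1"
    using catalan_prefix_counts[OF assms(1), of "a-1"] mext_mono[OF assms] assms
    by (auto simp: X_def)
  then have counts: "count_list (take k (X @ False # Y)) True \<le> mext n m a"
    if "count_list (take k (X @ False # Y)) False < a" for k
    using that count_list_take_le[of k X True] assms
    by (cases "k \<le> length X") (auto simp: not_le Suc_diff_Suc take_Cons')
  show ?thesis
  proof
    assume "reaches_height (catalan_path n m) a b"
    then show "b \<le> mext n m a"
      unfolding reaches_height_def path using counts order_trans by blast
  next
    assume "b \<le> mext n m a"
    then show "reaches_height (catalan_path n m) a b"
      unfolding reaches_height_def path
      using \<open>count_list X True = _\<close> \<open>count_list X False = _\<close> assms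
      by (intro exI[of _ "length X"]) auto
  qed
qed

lemma take_reflect_path:
  "k \<le> length C \<Longrightarrow> take k (reflect_path C) = rev (map Not (drop (length C - k) C))"
  by (simp add: reflect_path_def take_rev drop_map)

lemma length_reflect_path [simp]: "length (reflect_path C) = length C"
  by (simp add: reflect_path_def)

lemma reaches_height_reflect_path:
  assumes "count_list C True = n" "count_list C False = n" "1 \<le> a" "1 \<le> b" "b \<le> n"
  shows "reaches_height (reflect_path C) a b \<longleftrightarrow> reaches_height C (n+1-b) (n+1-a)"
proof -
  have "reaches_height (reflect_path C) a b \<longleftrightarrow>
      (\<exists>k\<le>length C. b \<le> n - count_list (take (length C - k) C) False \<and>
                     n - count_list (take (length C - k) C) True < a)"
    unfolding reaches_height_def length_reflect_path
    by (intro ex_cong1) (auto simp: take_reflect_path count_list_map_Not count_list_drop assms)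
  also have "\<dots> \<longleftrightarrow> (\<exists>j\<le>length C. b \<le> n - count_list (take j C) False \<and>
                                n - count_list (take j C) True < a)"
    by (metis diff_diff_cancel diff_le_self)
  also have "\<dots> \<longleftrightarrow> reaches_height C (n+1-b) (n+1-a)"
  proof -
    have "(b \<le> n - F \<and> n - T < a) \<longleftrightarrow> (n+1-a \<le> T \<and> F < n+1-b)"
      if "T \<le> n" "F \<le> n" for T F :: nat
      using that assms by linarith
    then show ?thesis
      unfolding reaches_height_def
      using count_list_take_le[of _ C True] count_list_take_le[of _ C False] assms
      by (metis (no_types, lifting))
  qed
  finally show ?thesis .
qed

lemma mext_eq: "1 \<le> i \<Longrightarrow> i < n \<Longrightarrow> mext n m i = m i"
  by (simp add: mext_def)

lemma reflected_nuio_iff: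
  assumes "nuio n m" "nuio n m'" "catalan_path n m' = reflect_path (catalan_path n m)"
    and "1 \<le> a" "a < b" "b \<le> n"
  shows "b \<le> m' a \<longleftrightarrow> n+1-a \<le> m (n+1-b)"
proof -
  have "b \<le> m' a \<longleftrightarrow> reaches_height (catalan_path n m') a b"
    using reaches_height_catalan_path[OF assms(2)] assms(4-6) by (simp add: mext_eq)
  also have "\<dots> \<longleftrightarrow> reaches_height (catalan_path n m) (n+1-b) (n+1-a)"
    unfolding assms(3) using reaches_height_reflect_path catalan_path_counts[OF assms(1)] assms(4-6)
    by simp
  also have "\<dots> \<longleftrightarrow> n+1-a \<le> m (n+1-b)"
    using reaches_height_catalan_path[OF assms(1)] assms(4-6) by (simp add: mext_eq)
  finally show ?thesis .
qed

definition flip :: "nat \<Rightarrow> nat \<Rightarrow> nat" where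
  "flip N x = (if 1 \<le> x \<and> x \<le> N then N + 1 - x else x)"

lemma flip_flip [simp]: "flip N (flip N x) = x"
  by (auto simp: flip_def)

lemma flip_outside: "x \<notin> {1..N} \<Longrightarrow> flip N x = x"
  by (auto simp: flip_def)

lemma flip_in_iff [simp]: "flip N x \<in> {1..N} \<longleftrightarrow> x \<in> {1..N}"
  by (auto simp: flip_def)

lemma flip_less_flip_iff: "x \<in> {1..N} \<Longrightarrow> y \<in> {1..N} \<Longrightarrow> flip N x < flip N y \<longleftrightarrow> y < x"
  by (auto simp: flip_def)

lemma inj_flip: "inj (flip N)"
  by (metis injI flip_flip)

definition inc_adj :: "nat \<Rightarrow> (nat \<Rightarrow> nat) \<Rightarrow> nat \<Rightarrow> nat \<Rightarrow> bool" where
  "inc_adj n m i j \<longleftrightarrow> 1 \<le> i \<and> i < j \<and> j \<le> n \<and> j \<le> m i"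

lemma inc_edges_eq: "inc_edges n m = {{i, j} | i j. inc_adj n m i j}"
  by (simp add: inc_edges_def inc_adj_def)

lemma inc_edges_subset: "e \<in> inc_edges n m \<Longrightarrow> e \<subseteq> {1..n}"
  by (auto simp: inc_edges_def)

lemma finite_inc_edges: "finite (inc_edges n m)"
proof (rule finite_subset)
  show "inc_edges n m \<subseteq> Pow {1..n}"
    by (auto simp: inc_edges_def)
qed simp

lemma proper_coloring_inc_adj:
  assumes "proper_coloring V (inc_edges n m) \<kappa>" "inc_adj n m u w"
  shows "\<kappa> u \<noteq> \<kappa> w"
proof -
  have "{u, w} \<in> inc_edges n m"
    using assms(2) unfolding inc_edges_eq by blast
  moreover have "u \<noteq> w"
    using assms(2) by (simp add: inc_adj_def)
  ultimately show ?thesis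
    using assms(1) unfolding proper_coloring_def by blast
qed

lemma inc_adj_reflect:
  assumes "nuio n m" "nuio n m'" "catalan_path n m' = reflect_path (catalan_path n m)"
  shows "inc_adj n m' i j \<longleftrightarrow> inc_adj n m (flip n j) (flip n i)"
  using reflected_nuio_iff[OF assms, of i j] reflected_nuio_iff[OF assms, of "flip n j" "flip n i"]
  by (auto simp: inc_adj_def flip_def)

lemma inc_edges_reflect:
  assumes "nuio n m" "nuio n m'" "catalan_path n m' = reflect_path (catalan_path n m)"
  shows "inc_edges n m' = (`) (flip n) ` inc_edges n m"
proof -
  have "inc_edges n m' = {flip n ` {i, j} | i j. inc_adj n m i j}"
    unfolding inc_edges_eq inc_adj_reflect[OF assms]
  proof (intro set_eqI iffI; elim CollectE exE conjE)
    fix e i j assume "e = {i, j}" "inc_adj n m (flip n j) (flip n i)"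
    then show "e \<in> {flip n ` {i, j} | i j. inc_adj n m i j}"
      by (intro CollectI exI[of _ "flip n j"] exI[of _ "flip n i"]) auto
  next
    fix e i j assume "e = flip n ` {i, j}" "inc_adj n m i j"
    then show "e \<in> {{i, j} | i j. inc_adj n m (flip n j) (flip n i)}"
      by (intro CollectI exI[of _ "flip n j"] exI[of _ "flip n i"]) auto
  qed
  also have "\<dots> = (`) (flip n) ` inc_edges n m"
    unfolding inc_edges_eq by blast
  finally show ?thesis .
qed

section \<open>Reversing vertices and colours\<close>

definition proper_colorings :: "nat set \<Rightarrow> nat set set \<Rightarrow> (nat \<Rightarrow> nat) \<Rightarrow> (nat \<Rightarrow> nat) set" where
  "proper_colorings V E \<alpha> =
     {\<kappa>. proper_coloring V E \<kappa> \<and> (\<forall>c. card {v\<in>V. \<kappa> v = c} = \<alpha> c)}"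

lemma chrom_qsym_eq: "chrom_qsym V E \<alpha> = (\<Sum>\<kappa>\<in>proper_colorings V E \<alpha>. monom 1 (asc E \<kappa>))"
  by (simp add: chrom_qsym_def proper_colorings_def)

definition ascent :: "(nat \<Rightarrow> nat) \<Rightarrow> nat set \<Rightarrow> bool" where
  "ascent \<kappa> e \<longleftrightarrow> (\<exists>i j. e = {i, j} \<and> i < j \<and> \<kappa> i < \<kappa> j)"

definition descent :: "(nat \<Rightarrow> nat) \<Rightarrow> nat set \<Rightarrow> bool" where
  "descent \<kappa> e \<longleftrightarrow> (\<exists>i j. e = {i, j} \<and> i < j \<and> \<kappa> j < \<kappa> i)"

definition des :: "nat set set \<Rightarrow> (nat \<Rightarrow> nat) \<Rightarrow> nat" where
  "des E \<kappa> = card {e\<in>E. descent \<kappa> e}"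

lemma asc_eq_card_ascents: "asc E \<kappa> = card {e\<in>E. ascent \<kappa> e}"
  by (simp add: asc_def ascent_def)

lemma ascent_doubleton: "i < j \<Longrightarrow> ascent \<kappa> {i, j} \<longleftrightarrow> \<kappa> i < \<kappa> j"
  by (auto simp: ascent_def doubleton_eq_iff)

lemma flip_image_flip_image [simp]: "flip N ` flip N ` A = A"
  by (simp add: image_image)

lemma ascent_flip_comp:
  "\<forall>v\<in>e. \<kappa> v \<in> {1..N} \<Longrightarrow> ascent (flip N \<circ> \<kappa>) e \<longleftrightarrow> descent \<kappa> e"
  unfolding ascent_def descent_def
  using flip_less_flip_iff[of "\<kappa> _" N "\<kappa> _"] by (intro ex_cong1 conj_cong refl) auto

lemma ascent_flip_image:
  assumes "e \<subseteq> {1..n}"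
  shows "ascent \<kappa> (flip n ` e) \<longleftrightarrow> descent (\<kappa> \<circ> flip n) e"
proof
  assume "ascent \<kappa> (flip n ` e)"
  then obtain i j where ij: "flip n ` e = {i, j}" "i < j" "\<kappa> i < \<kappa> j"
    unfolding ascent_def by blast
  moreover have "flip n ` e \<subseteq> {1..n}"
    using assms flip_in_iff[of n] by blast
  ultimately have "e = {flip n j, flip n i}" "i \<in> {1..n}" "j \<in> {1..n}"
    using flip_image_flip_image[of n e] by (auto simp: insert_commute)
  moreover have "flip n j < flip n i"
    using flip_less_flip_iff[of j n i] ij(2) \<open>i \<in> {1..n}\<close> \<open>j \<in> {1..n}\<close> by simp
  ultimately show "descent (\<kappa> \<circ> flip n) e"
    unfolding descent_def using ij(3)
    by (intro exI[of _ "flip n j"] exI[of _ "flip n i"]) simp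
next
  assume "descent (\<kappa> \<circ> flip n) e"
  then obtain i j where ij: "e = {i, j}" "i < j" "\<kappa> (flip n j) < \<kappa> (flip n i)"
    unfolding descent_def by auto
  then have "flip n ` e = {flip n j, flip n i}" "flip n j < flip n i"
    using assms flip_less_flip_iff[of j n i] by auto
  then show "ascent \<kappa> (flip n ` e)"
    unfolding ascent_def using ij(3) by blast
qed

lemma asc_flip_colors:
  assumes "\<forall>e\<in>E. \<forall>v\<in>e. \<kappa> v \<in> {1..N}"
  shows "asc E (flip N \<circ> \<kappa>) = des E \<kappa>"
  unfolding asc_eq_card_ascents des_def
  using assms ascent_flip_comp by (intro arg_cong[where f = card] Collect_cong conj_cong refl) auto

lemma asc_flip_vertices:
  assumes "\<forall>e\<in>E. e \<subseteq> {1..n}"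
  shows "asc ((`) (flip n) ` E) \<kappa> = des E (\<kappa> \<circ> flip n)"
proof -
  have "{e\<in>(`) (flip n) ` E. ascent \<kappa> e} = (`) (flip n) ` {e\<in>E. ascent \<kappa> (flip n ` e)}"
    by blast
  also have "{e\<in>E. ascent \<kappa> (flip n ` e)} = {e\<in>E. descent (\<kappa> \<circ> flip n) e}"
    using assms ascent_flip_image by blast
  finally have "{e\<in>(`) (flip n) ` E. ascent \<kappa> e} = (`) (flip n) ` {e\<in>E. descent (\<kappa> \<circ> flip n) e}" .
  moreover have "inj (image (flip n))"
    using inj_flip by (simp add: inj_image_eq_iff inj_def)
  ultimately show ?thesis
    unfolding asc_eq_card_ascents des_def by (simp add: card_image inj_on_subset)
qed

lemma proper_colorings_le:
  assumes "\<kappa> \<in> proper_colorings V E \<alpha>" "\<forall>x>N. \<alpha> x = 0" "finite V" "v \<in> V"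
  shows "\<kappa> v \<le> N"
proof (rule ccontr)
  assume "\<not> \<kappa> v \<le> N"
  then have "card {w\<in>V. \<kappa> w = \<kappa> v} = 0"
    using assms(1,2) unfolding proper_colorings_def by auto
  then show False
    using assms(3,4) by auto
qed

lemma proper_colorings_empty:
  assumes "finite V" "\<forall>N. \<exists>x>N. \<alpha> x \<noteq> 0"
  shows "proper_colorings V E \<alpha> = {}"
proof (rule ccontr)
  assume "proper_colorings V E \<alpha> \<noteq> {}"
  then obtain \<kappa> where \<kappa>: "\<kappa> \<in> proper_colorings V E \<alpha>" by blast
  obtain x where x: "x > Max (\<kappa> ` V)" "\<alpha> x \<noteq> 0"
    using assms(2) by blast
  have "\<kappa> v \<noteq> x" if "v \<in> V" for v
  proof -
    have "\<kappa> v \<le> Max (\<kappa> ` V)"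
      using assms(1) that by simp
    then show ?thesis
      using x(1) by simp
  qed
  then have "card {v\<in>V. \<kappa> v = x} = 0"
    by (metis (mono_tags, lifting) card.empty empty_Collect_eq)
  then show False
    using \<kappa> x(2) unfolding proper_colorings_def by simp
qed

lemma card_flip_vertices: "card {v\<in>{1..n}. P (flip n v)} = card {v\<in>{1..n}. P v}"
  by (rule bij_betw_same_card[of "flip n"], rule bij_betw_byWitness[of _ "flip n"])
    (auto simp: flip_def)

lemma flip_coloring_mem:
  assumes "\<kappa> \<in> proper_colorings {1..n} E \<alpha>" "\<forall>x>N. \<alpha> x = 0"
  shows "flip N \<circ> \<kappa> \<circ> flip n \<in> proper_colorings {1..n} ((`) (flip n) ` E) (\<alpha> \<circ> flip N)"
proof -
  have proper: "proper_coloring {1..n} E \<kappa>" and content: "\<And>c. card {v\<in>{1..n}. \<kappa> v = c} = \<alpha> c"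
    using assms(1) unfolding proper_colorings_def by auto
  have colors: "\<kappa> v \<in> {1..N}" if "v \<in> {1..n}" for v
    using proper proper_colorings_le[OF assms finite_atLeastAtMost] that unfolding proper_coloring_def by auto
  have "proper_coloring {1..n} ((`) (flip n) ` E) (flip N \<circ> \<kappa> \<circ> flip n)"
    unfolding proper_coloring_def
  proof (intro conjI ballI allI impI)
    fix v assume "v \<in> {1..n}"
    then have "\<kappa> (flip n v) \<in> {1..N}"
      by (intro colors) (auto simp: flip_def)
    then show "1 \<le> (flip N \<circ> \<kappa> \<circ> flip n) v"
      by (auto simp: flip_def)
  next
    fix v :: nat assume "v \<notin> {1..n}"
    then show "(flip N \<circ> \<kappa> \<circ> flip n) v = 0"
      using proper unfolding proper_coloring_def by (simp add: flip_outside)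
  next
    fix e i j assume "e \<in> (`) (flip n) ` E" "i \<in> e" "j \<in> e" "i \<noteq> j"
    then show "(flip N \<circ> \<kappa> \<circ> flip n) i \<noteq> (flip N \<circ> \<kappa> \<circ> flip n) j"
      using proper unfolding proper_coloring_def by (auto simp: inj_eq[OF inj_flip])
  qed
  moreover have "card {v\<in>{1..n}. (flip N \<circ> \<kappa> \<circ> flip n) v = c} = (\<alpha> \<circ> flip N) c" for c
  proof -
    have "card {v\<in>{1..n}. (flip N \<circ> \<kappa> \<circ> flip n) v = c} = card {v\<in>{1..n}. flip N (\<kappa> v) = c}"
      using card_flip_vertices[of n "\<lambda>w. flip N (\<kappa> w) = c"] by simp
    also have "{v\<in>{1..n}. flip N (\<kappa> v) = c} = {v\<in>{1..n}. \<kappa> v = flip N c}"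
      by (metis flip_flip)
    finally show ?thesis
      using content by simp
  qed
  ultimately show ?thesis
    unfolding proper_colorings_def by simp
qed

lemma asc_flip_coloring:
  assumes "\<forall>e\<in>E. e \<subseteq> {1..n}" "\<kappa> \<in> proper_colorings {1..n} E \<alpha>" "\<forall>x>N. \<alpha> x = 0"
  shows "asc ((`) (flip n) ` E) (flip N \<circ> \<kappa> \<circ> flip n) = asc E \<kappa>"
proof -
  have in_range: "\<kappa> v \<in> {1..N}" if "v \<in> {1..n}" for v
    using assms(2) proper_colorings_le[OF assms(2,3) finite_atLeastAtMost that] that
    unfolding proper_colorings_def proper_coloring_def by auto
  have colors: "\<forall>e\<in>E. \<forall>v\<in>e. (flip N \<circ> \<kappa>) v \<in> {1..N}"
  proof (intro ballI)
    fix e v assume "e \<in> E" "v \<in> e"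
    then have "\<kappa> v \<in> {1..N}"
      using assms(1) in_range by blast
    then show "(flip N \<circ> \<kappa>) v \<in> {1..N}"
      by (auto simp: flip_def)
  qed
  have "asc ((`) (flip n) ` E) (flip N \<circ> \<kappa> \<circ> flip n) = des E (flip N \<circ> \<kappa>)"
    using asc_flip_vertices[OF assms(1)] by (simp add: comp_def)
  also have "\<dots> = asc E (flip N \<circ> (flip N \<circ> \<kappa>))"
    by (rule asc_flip_colors[OF colors, symmetric])
  finally show ?thesis
    by (simp add: comp_def)
qed

lemma chrom_qsym_flip:
  assumes "\<forall>e\<in>E. e \<subseteq> {1..n}" "\<forall>x>N. \<alpha> x = 0"
  shows "chrom_qsym {1..n} ((`) (flip n) ` E) (\<alpha> \<circ> flip N) = chrom_qsym {1..n} E \<alpha>"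
  unfolding chrom_qsym_eq
proof (rule sym, rule sum.reindex_bij_witness[of _ "\<lambda>\<kappa>. flip N \<circ> \<kappa> \<circ> flip n" "\<lambda>\<kappa>. flip N \<circ> \<kappa> \<circ> flip n"])
  fix \<kappa> assume "\<kappa> \<in> proper_colorings {1..n} ((`) (flip n) ` E) (\<alpha> \<circ> flip N)"
  moreover have "\<forall>x>N. (\<alpha> \<circ> flip N) x = 0"
    using assms(2) by (auto simp: flip_def)
  ultimately have "flip N \<circ> \<kappa> \<circ> flip n \<in>
      proper_colorings {1..n} ((`) (flip n) ` (`) (flip n) ` E) (\<alpha> \<circ> flip N \<circ> flip N)"
    by (rule flip_coloring_mem)
  then show "flip N \<circ> \<kappa> \<circ> flip n \<in> proper_colorings {1..n} E \<alpha>"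
    by (simp add: image_image comp_def)
next
  fix \<kappa> assume \<kappa>: "\<kappa> \<in> proper_colorings {1..n} E \<alpha>"
  then show "flip N \<circ> \<kappa> \<circ> flip n \<in> proper_colorings {1..n} ((`) (flip n) ` E) (\<alpha> \<circ> flip N)"
    using flip_coloring_mem assms(2) by blast
  show "monom 1 (asc ((`) (flip n) ` E) (flip N \<circ> \<kappa> \<circ> flip n)) = monom 1 (asc E \<kappa>)"
    using asc_flip_coloring[OF assms(1) \<kappa> assms(2)] by simp
qed (simp_all add: fun_eq_iff)

section \<open>Runs in unit interval graphs\<close>

definition next_in :: "'a::linorder set \<Rightarrow> 'a \<Rightarrow> 'a" where
  "next_in H y = Min {z\<in>H. y < z}"

definition prev_in :: "'a::linorder set \<Rightarrow> 'a \<Rightarrow> 'a" where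
  "prev_in H y = Max {z\<in>H. z < y}"

definition rank :: "'a::linorder set \<Rightarrow> 'a \<Rightarrow> nat" where
  "rank H v = card {w\<in>H. w < v}"

lemma next_in_bounds:
  assumes "finite H" "z \<in> H" "y < z"
  shows "next_in H y \<in> H" "y < next_in H y" "next_in H y \<le> z"
proof -
  have "finite {z\<in>H. y < z}" "z \<in> {z\<in>H. y < z}"
    using assms by simp_all
  then show "next_in H y \<in> H" "y < next_in H y" "next_in H y \<le> z"
    unfolding next_in_def using Min_in Min_le by blast+
qed

lemma prev_in_bounds:
  assumes "finite H" "u \<in> H" "u < w"
  shows "prev_in H w \<in> H" "prev_in H w < w" "u \<le> prev_in H w"
proof -
  have "finite {z\<in>H. z < w}" "u \<in> {z\<in>H. z < w}"
    using assms by simp_all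
  then show "prev_in H w \<in> H" "prev_in H w < w" "u \<le> prev_in H w"
    unfolding prev_in_def using Max_in Max_ge by blast+
qed

lemma next_in_prev_in:
  assumes "finite H" "u \<in> H" "u < w" "w \<in> H"
  shows "next_in H (prev_in H w) = w"
  unfolding next_in_def
proof (rule Min_eqI)
  show "finite {z\<in>H. prev_in H w < z}" "w \<in> {z\<in>H. prev_in H w < z}"
    using prev_in_bounds[OF assms(1-3)] assms by simp_all
  show "w \<le> z" if "z \<in> {z\<in>H. prev_in H w < z}" for z
    using that prev_in_bounds(3)[OF assms(1), of z w] by fastforce
qed

lemma prev_in_next_in:
  assumes "finite H" "y \<in> H" "z \<in> H" "y < z"
  shows "prev_in H (next_in H y) = y"
  unfolding prev_in_def
proof (rule Max_eqI)
  show "finite {w\<in>H. w < next_in H y}" "y \<in> {w\<in>H. w < next_in H y}"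
    using next_in_bounds[OF assms(1,3,4)] assms by simp_all
  show "w \<le> y" if "w \<in> {w\<in>H. w < next_in H y}" for w
    using that next_in_bounds(3)[OF assms(1), of w y] by fastforce
qed

lemma rank_next_in:
  assumes "finite H" "y \<in> H" "z \<in> H" "y < z"
  shows "rank H (next_in H y) = Suc (rank H y)"
proof -
  have "{w\<in>H. w < next_in H y} = insert y {w\<in>H. w < y}"
    using next_in_bounds[OF assms(1,3,4)] next_in_bounds(3)[OF assms(1), of _ y] assms(2)
    by (auto simp: not_less) (meson linorder_neqE not_less)
  then show ?thesis
    unfolding rank_def using assms(1) by simp
qed

lemma rank_prev_in:
  assumes "finite H" "u \<in> H" "u < w" "w \<in> H"
  shows "rank H w = Suc (rank H (prev_in H w))"
  using rank_next_in[OF assms(1) prev_in_bounds(1)[OF assms(1-3)] assms(4) prev_in_bounds(2)[OF assms(1-3)]]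
    next_in_prev_in[OF assms] by simp

lemma card_eq_by_involution:
  assumes "finite S" "\<And>v. v \<in> S \<Longrightarrow> g v \<in> S" "\<And>v. v \<in> S \<Longrightarrow> g (g v) = v"
    and "\<And>v. v \<in> S \<Longrightarrow> P (g v) \<longleftrightarrow> \<not> P v"
  shows "card {v\<in>S. P v} = card {v\<in>S. \<not> P v}"
  by (rule bij_betw_same_card[of g], rule bij_betw_byWitness[of _ g]) (use assms in auto)

locale nuio_graph =
  fixes n :: nat and m :: "nat \<Rightarrow> nat"
  assumes nuio: "nuio n m"
begin

lemma inc_adj_shrink:
  assumes "inc_adj n m y' z'" "y' \<le> y" "y < z" "z \<le> z'"
  shows "inc_adj n m y z"
proof -
  have "m y' \<le> m y"
    using assms nuio unfolding inc_adj_def nuio_def by auto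
  then show ?thesis
    using assms unfolding inc_adj_def by auto
qed

text \<open>Since edges of a unit interval graph shrink to edges, the connected components of the
  subgraph induced by H are the runs: maximal segments of H not separated by a gap that no
  edge inside H spans.\<close>

definition separated :: "nat set \<Rightarrow> nat \<Rightarrow> bool" where
  "separated H x \<longleftrightarrow> \<not> (\<exists>y\<in>H. \<exists>z\<in>H. y \<le> x \<and> x < z \<and> inc_adj n m y z)"

definition linked :: "nat set \<Rightarrow> nat \<Rightarrow> nat \<Rightarrow> bool" where
  "linked H u w \<longleftrightarrow> (\<forall>x. min u w \<le> x \<and> x < max u w \<longrightarrow> \<not> separated H x)"

definition run :: "nat set \<Rightarrow> nat \<Rightarrow> nat set" where
  "run H v = {w\<in>H. linked H v w}"

definition run_min :: "nat set \<Rightarrow> nat \<Rightarrow> nat" where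
  "run_min H v = Min (run H v)"

definition run_max :: "nat set \<Rightarrow> nat \<Rightarrow> nat" where
  "run_max H v = Max (run H v)"

text \<open>Runs are intervals of H in rank order, so this says that the run of v has an odd
  number of elements.\<close>

definition odd_run :: "nat set \<Rightarrow> nat \<Rightarrow> bool" where
  "odd_run H v \<longleftrightarrow> even (rank H (run_min H v) + rank H (run_max H v))"

lemma linked_refl: "linked H u u"
  by (auto simp: linked_def)

lemma linked_sym: "linked H u w \<longleftrightarrow> linked H w u"
  by (simp add: linked_def min.commute max.commute)

lemma linked_trans: "linked H u v \<Longrightarrow> linked H v w \<Longrightarrow> linked H u w"
  unfolding linked_def by (metis (no_types, opaque_lifting) le_less_trans linorder_le_cases
      max.absorb_iff2 max.cobounded2 max_def min.absorb_iff1 min_def not_less)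

lemma linked_between:
  "u \<le> y \<Longrightarrow> y \<le> w \<Longrightarrow> linked H u w \<Longrightarrow> linked H u y \<and> linked H y w"
  by (simp add: linked_def min_def max_def)

lemma linked_if_inc_adj: "y \<in> H \<Longrightarrow> z \<in> H \<Longrightarrow> inc_adj n m y z \<Longrightarrow> linked H y z"
  unfolding linked_def separated_def inc_adj_def by (auto simp: min_def max_def)

lemma inc_adj_next_in:
  assumes "finite H" "y \<in> H" "z \<in> H" "y < z" "linked H y z"
  shows "inc_adj n m y (next_in H y)"
proof -
  have "\<not> separated H y"
    using assms(4,5) unfolding linked_def by simp
  then obtain y' z' where "y' \<in> H" "z' \<in> H" "y' \<le> y" "y < z'" "inc_adj n m y' z'"
    unfolding separated_def by blast
  then show ?thesis
    using inc_adj_shrink next_in_bounds[OF assms(1)] by blast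
qed

lemma mem_run_iff: "w \<in> run H v \<longleftrightarrow> w \<in> H \<and> linked H v w"
  by (simp add: run_def)

lemma mem_run_self: "v \<in> H \<Longrightarrow> v \<in> run H v"
  by (simp add: run_def linked_refl)

lemma run_eq: "w \<in> run H v \<Longrightarrow> run H w = run H v"
  unfolding run_def using linked_trans linked_sym by blast

lemma run_bounds:
  assumes "finite H" "v \<in> H"
  shows "run_min H v \<in> run H v" "run_max H v \<in> run H v"
    and "w \<in> run H v \<Longrightarrow> run_min H v \<le> w \<and> w \<le> run_max H v"
proof -
  have "finite (run H v)" "run H v \<noteq> {}"
    using assms mem_run_self[of v H] by (auto simp: run_def)
  then show "run_min H v \<in> run H v" "run_max H v \<in> run H v"
    and "w \<in> run H v \<Longrightarrow> run_min H v \<le> w \<and> w \<le> run_max H v"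
    unfolding run_min_def run_max_def by auto
qed

lemma run_invariants:
  assumes "w \<in> run H v"
  shows "run_min H w = run_min H v" "run_max H w = run_max H v" "odd_run H w = odd_run H v"
  using run_eq[OF assms] by (simp_all add: run_min_def run_max_def odd_run_def)

lemma next_in_run:
  assumes H: "finite H" and y: "y \<in> H" "y \<noteq> run_max H y"
  shows "next_in H y \<in> run H y" "y < next_in H y" "inc_adj n m y (next_in H y)"
    and "rank H (next_in H y) = Suc (rank H y)" "prev_in H (next_in H y) = y"
proof -
  have h: "run_max H y \<in> H" "y < run_max H y" "linked H y (run_max H y)"
    using run_bounds[OF H y(1)] mem_run_self[OF y(1)] y(2)
    by (auto simp: mem_run_iff order.order_iff_strict)
  then have "next_in H y \<in> H" "y < next_in H y" "next_in H y \<le> run_max H y"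
    using next_in_bounds[OF H] by blast+
  then show "next_in H y \<in> run H y" "y < next_in H y"
    using linked_between[of y "next_in H y" "run_max H y" H] h by (auto simp: mem_run_iff)
  show "inc_adj n m y (next_in H y)"
    using inc_adj_next_in[OF H y(1) h] .
  show "rank H (next_in H y) = Suc (rank H y)" "prev_in H (next_in H y) = y"
    using rank_next_in[OF H y(1) h(1,2)] prev_in_next_in[OF H y(1) h(1,2)] by simp_all
qed

lemma prev_in_run:
  assumes H: "finite H" and y: "y \<in> H" "y \<noteq> run_min H y"
  shows "prev_in H y \<in> run H y" "prev_in H y < y" "inc_adj n m (prev_in H y) y"
    and "rank H y = Suc (rank H (prev_in H y))" "next_in H (prev_in H y) = y"
proof -
  have "run_min H y \<in> H" "run_min H y < y" "linked H y (run_min H y)"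
    using run_bounds(1)[OF H y(1)] run_bounds(3)[OF H y(1) mem_run_self[OF y(1)]] y(2)
    by (auto simp: mem_run_iff order.order_iff_strict)
  then have l: "run_min H y \<in> H" "run_min H y < y" "linked H (run_min H y) y"
    using linked_sym by blast+
  then have p: "prev_in H y \<in> H" "prev_in H y < y" "run_min H y \<le> prev_in H y"
    using prev_in_bounds[OF H] by blast+
  then have "linked H (prev_in H y) y"
    using linked_between[of "run_min H y" "prev_in H y" y H] l by auto
  then show "prev_in H y \<in> run H y" "prev_in H y < y"
    using p linked_sym by (auto simp: mem_run_iff)
  show "rank H y = Suc (rank H (prev_in H y))" "next_in H (prev_in H y) = y"
    using rank_prev_in[OF H l(1,2) y(1)] next_in_prev_in[OF H l(1,2) y(1)] by simp_all
  then show "inc_adj n m (prev_in H y) y"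
    using inc_adj_next_in[OF H p(1) y(1) p(2) \<open>linked H (prev_in H y) y\<close>] by simp
qed

text \<open>The partner pairs the elements of each run of H in rank order, starting from the run
  minimum; only the maximum of an odd run stays unpaired.\<close>

definition partner :: "nat set \<Rightarrow> nat \<Rightarrow> nat" where
  "partner H v = (if even (rank H v + rank H (run_min H v)) then next_in H v else prev_in H v)"

definition unpaired :: "nat set \<Rightarrow> nat \<Rightarrow> bool" where
  "unpaired H v \<longleftrightarrow> odd_run H v \<and> v = run_max H v"

lemma partner_pairs:
  assumes H: "finite H" and v: "v \<in> H" "\<not> unpaired H v"
  defines "p \<equiv> partner H v"
  shows "p \<in> run H v" "partner H p = v" "\<not> unpaired H p"
    and "inc_adj n m v p \<or> inc_adj n m p v"
proof -
  have "p \<in> run H v \<and> partner H p = v \<and> \<not> unpaired H p \<and> (inc_adj n m v p \<or> inc_adj n m p v)"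
  proof (cases "even (rank H v + rank H (run_min H v))")
    case True
    then have "v \<noteq> run_max H v"
      using v(2) unfolding unpaired_def odd_run_def by (auto simp: add.commute)
    note z = next_in_run[OF H v(1) this]
    have "p = next_in H v"
      using True by (simp add: p_def partner_def)
    moreover have "partner H (next_in H v) = v" "\<not> unpaired H (next_in H v)"
      using True z run_invariants[OF z(1)] by (auto simp: partner_def unpaired_def odd_run_def)
    ultimately show ?thesis
      using z by simp
  next
    case False
    then have "v \<noteq> run_min H v"
      by auto
    note y = prev_in_run[OF H v(1) this]
    have "p = prev_in H v"
      using False by (simp add: p_def partner_def)
    moreover have "partner H (prev_in H v) = v"
      using False y run_invariants[OF y(1)] by (auto simp: partner_def)
    moreover have "\<not> unpaired H (prev_in H v)"
      using y run_bounds(3)[OF H v(1), of v] mem_run_self[OF v(1)] run_invariants[OF y(1)]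
      by (auto simp: unpaired_def)
    ultimately show ?thesis
      using y by simp
  qed
  then show "p \<in> run H v" "partner H p = v" "\<not> unpaired H p"
    and "inc_adj n m v p \<or> inc_adj n m p v"
    by blast+
qed

end

section \<open>Symmetry of the chromatic quasisymmetric function\<close>

locale nuio_color_swap = nuio_graph +
  fixes c :: nat
  assumes c_pos: "1 \<le> c"
begin

definition bicolored :: "(nat \<Rightarrow> nat) \<Rightarrow> nat set" where
  "bicolored \<kappa> = {v\<in>{1..n}. \<kappa> v = c \<or> \<kappa> v = Suc c}"

lemma finite_bicolored: "finite (bicolored \<kappa>)"
  by (simp add: bicolored_def)

lemma bicolored_color: "v \<in> bicolored \<kappa> \<Longrightarrow> \<kappa> v = c \<or> \<kappa> v = Suc c"
  by (simp add: bicolored_def)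

text \<open>Three pairwise adjacent vertices cannot share two colours, so a bicoloured
  neighbour of y is the next bicoloured vertex after y.\<close>

lemma next_in_bicolored:
  assumes proper: "proper_coloring {1..n} (inc_edges n m) \<kappa>"
    and yz: "y \<in> bicolored \<kappa>" "z \<in> bicolored \<kappa>" "inc_adj n m y z"
  shows "next_in (bicolored \<kappa>) y = z"
  unfolding next_in_def
proof (rule Min_eqI)
  show "finite {x\<in>bicolored \<kappa>. y < x}" "z \<in> {x\<in>bicolored \<kappa>. y < x}"
    using yz finite_bicolored by (auto simp: inc_adj_def)
  show "z \<le> x" if x: "x \<in> {x\<in>bicolored \<kappa>. y < x}" for x
  proof (rule ccontr)
    assume "\<not> z \<le> x"
    then have "inc_adj n m y x" "inc_adj n m x z"
      using inc_adj_shrink[OF yz(3)] x by auto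
    then have "\<kappa> y \<noteq> \<kappa> x" "\<kappa> x \<noteq> \<kappa> z" "\<kappa> y \<noteq> \<kappa> z"
      using proper_coloring_inc_adj[OF proper] yz(3) by auto
    then show False
      using bicolored_color[of y \<kappa>] bicolored_color[of x \<kappa>] bicolored_color[of z \<kappa>] x yz
      by auto
  qed
qed

lemma card_colors_balanced:
  assumes proper: "proper_coloring {1..n} (inc_edges n m) \<kappa>"
    and D: "D \<subseteq> bicolored \<kappa>"
    and paired: "\<And>v. v \<in> D \<Longrightarrow> \<not> unpaired (bicolored \<kappa>) v \<and> partner (bicolored \<kappa>) v \<in> D"
  shows "card {v\<in>D. \<kappa> v = c} = card {v\<in>D. \<kappa> v = Suc c}"
proof -
  let ?H = "bicolored \<kappa>"
  have "card {v\<in>D. \<kappa> v = c} = card {v\<in>D. \<kappa> v \<noteq> c}"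
  proof (rule card_eq_by_involution)
    show "finite D"
      using D finite_bicolored finite_subset by blast
  next
    fix v assume v: "v \<in> D"
    then have v': "v \<in> ?H" "\<not> unpaired ?H v" "partner ?H v \<in> D"
      using paired D by auto
    show "partner ?H v \<in> D"
      using v' by simp
    show "partner ?H (partner ?H v) = v"
      using partner_pairs(2)[OF finite_bicolored v'(1,2)] .
    have "\<kappa> (partner ?H v) \<noteq> \<kappa> v"
      using partner_pairs(4)[OF finite_bicolored v'(1,2)] proper_coloring_inc_adj[OF proper] by metis
    then show "\<kappa> (partner ?H v) = c \<longleftrightarrow> \<kappa> v \<noteq> c"
      using bicolored_color[of v \<kappa>] bicolored_color[of "partner ?H v" \<kappa>] v'(1,3) D by auto
  qed
  also have "{v\<in>D. \<kappa> v \<noteq> c} = {v\<in>D. \<kappa> v = Suc c}"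
    using D bicolored_color by fastforce
  finally show ?thesis .
qed

abbreviation swap_c :: "nat \<Rightarrow> nat" where
  "swap_c \<equiv> Transposition.transpose c (Suc c)"

definition swap_odd_runs :: "(nat \<Rightarrow> nat) \<Rightarrow> nat \<Rightarrow> nat" where
  "swap_odd_runs \<kappa> v =
     (if v \<in> bicolored \<kappa> \<and> odd_run (bicolored \<kappa>) v then swap_c (\<kappa> v) else \<kappa> v)"

lemma bicolored_swap_odd_runs [simp]: "bicolored (swap_odd_runs \<kappa>) = bicolored \<kappa>"
  by (auto simp: bicolored_def swap_odd_runs_def Transposition.transpose_def)

lemma swap_odd_runs_involutive [simp]: "swap_odd_runs (swap_odd_runs \<kappa>) = \<kappa>"
  by (rule ext) (simp add: swap_odd_runs_def[of "swap_odd_runs \<kappa>"], simp add: swap_odd_runs_def)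

lemma swap_odd_runs_outside: "v \<notin> bicolored \<kappa> \<Longrightarrow> swap_odd_runs \<kappa> v = \<kappa> v"
  by (simp add: swap_odd_runs_def)

lemma swap_odd_runs_bicolored:
  "v \<in> bicolored \<kappa> \<Longrightarrow> swap_odd_runs \<kappa> v = c \<or> swap_odd_runs \<kappa> v = Suc c"
  using bicolored_swap_odd_runs[of \<kappa>] bicolored_color[of v "swap_odd_runs \<kappa>"] by simp

lemma swap_odd_runs_inc_adj:
  assumes proper: "proper_coloring {1..n} (inc_edges n m) \<kappa>" and adj: "inc_adj n m a b"
  shows "swap_odd_runs \<kappa> a \<noteq> swap_odd_runs \<kappa> b"
proof -
  let ?H = "bicolored \<kappa>"
  have ne: "\<kappa> a \<noteq> \<kappa> b"
    using proper_coloring_inc_adj[OF proper adj] .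
  have in_range: "a \<in> {1..n}" "b \<in> {1..n}"
    using adj by (auto simp: inc_adj_def)
  consider "a \<in> ?H" "b \<in> ?H" | "a \<in> ?H \<longleftrightarrow> b \<notin> ?H" | "a \<notin> ?H" "b \<notin> ?H"
    by blast
  then show ?thesis
  proof cases
    case 1
    then have "b \<in> run ?H a"
      using linked_if_inc_adj[OF _ _ adj] by (simp add: mem_run_iff)
    then have "odd_run ?H b = odd_run ?H a"
      by (rule run_invariants)
    then show ?thesis
      using 1 ne unfolding swap_odd_runs_def by (auto dest: transpose_eq_imp_eq)
  next
    case 2
    have "swap_odd_runs \<kappa> v \<in> {c, Suc c} \<longleftrightarrow> v \<in> ?H" if "v \<in> {1..n}" for v
    proof (cases "v \<in> ?H")
      case False
      then have "swap_odd_runs \<kappa> v = \<kappa> v"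
        by (rule swap_odd_runs_outside)
      with False that show ?thesis
        by (auto simp: bicolored_def)
    qed (use swap_odd_runs_bicolored in auto)
    from this[OF in_range(1)] this[OF in_range(2)] 2 show ?thesis
      by auto
  next
    case 3
    then show ?thesis
      using ne by (simp add: swap_odd_runs_outside)
  qed
qed

lemma proper_swap_odd_runs:
  assumes proper: "proper_coloring {1..n} (inc_edges n m) \<kappa>"
  shows "proper_coloring {1..n} (inc_edges n m) (swap_odd_runs \<kappa>)"
  unfolding proper_coloring_def
proof (intro conjI ballI allI impI)
  fix v assume "v \<in> {1..n}"
  then show "1 \<le> swap_odd_runs \<kappa> v"
    using proper c_pos swap_odd_runs_bicolored[of v \<kappa>] swap_odd_runs_outside[of v \<kappa>]
    unfolding proper_coloring_def by fastforce
next
  fix v :: nat assume "v \<notin> {1..n}"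
  then show "swap_odd_runs \<kappa> v = 0"
    using proper unfolding proper_coloring_def swap_odd_runs_def bicolored_def by auto
next
  fix e i j assume e: "e \<in> inc_edges n m" "i \<in> e" "j \<in> e" "i \<noteq> j"
  then obtain a b where "e = {a, b}" "inc_adj n m a b"
    unfolding inc_edges_eq by blast
  then show "swap_odd_runs \<kappa> i \<noteq> swap_odd_runs \<kappa> j"
    using swap_odd_runs_inc_adj[OF proper, of a b] e(2-4) by auto
qed

lemma even_runs_balanced:
  assumes proper: "proper_coloring {1..n} (inc_edges n m) \<kappa>"
  defines "H \<equiv> bicolored \<kappa>"
  defines "D \<equiv> {v\<in>H. \<not> odd_run H v}"
  shows "card {v\<in>D. \<kappa> v = c} = card {v\<in>D. \<kappa> v = Suc c}"
proof (rule card_colors_balanced[OF proper])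
  show "D \<subseteq> bicolored \<kappa>"
    by (auto simp: D_def H_def)
  fix v assume "v \<in> D"
  then show "\<not> unpaired (bicolored \<kappa>) v \<and> partner (bicolored \<kappa>) v \<in> D"
    using partner_pairs(1)[OF finite_bicolored, of v \<kappa>] run_invariants(3)[of "partner H v" H v]
    by (auto simp: D_def H_def unpaired_def mem_run_iff)
qed

lemma odd_runs_balanced:
  assumes proper: "proper_coloring {1..n} (inc_edges n m) \<kappa>"
  defines "H \<equiv> bicolored \<kappa>"
  defines "D \<equiv> {v\<in>H. v \<noteq> run_max H v \<and> odd_run H v}"
  shows "card {v\<in>D. \<kappa> v = c} = card {v\<in>D. \<kappa> v = Suc c}"
proof (rule card_colors_balanced[OF proper])
  show "D \<subseteq> bicolored \<kappa>"
    by (auto simp: D_def H_def)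
  fix v assume v: "v \<in> D"
  then have "\<not> unpaired H v"
    by (simp add: D_def unpaired_def)
  moreover have "partner H v \<in> D"
    using v partner_pairs[OF finite_bicolored, of v \<kappa>] run_invariants[of "partner H v" H v]
    unfolding D_def H_def unpaired_def by (auto simp: mem_run_iff)
  ultimately show "\<not> unpaired (bicolored \<kappa>) v \<and> partner (bicolored \<kappa>) v \<in> D"
    by (simp add: H_def)
qed

lemma card_swap_odd_runs:
  assumes proper: "proper_coloring {1..n} (inc_edges n m) \<kappa>"
  shows "card {v\<in>{1..n}. swap_odd_runs \<kappa> v = x} = card {v\<in>{1..n}. \<kappa> v = swap_c x}"
proof -
  let ?H = "bicolored \<kappa>"
  define Odd where "Odd = {v\<in>?H. odd_run ?H v}"
  define Rest where "Rest = {v\<in>{1..n}. v \<notin> Odd}"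
  have fin: "Odd \<subseteq> {1..n}" "finite Odd" "finite Rest" "Rest \<inter> Odd = {}"
    by (auto simp: Odd_def Rest_def bicolored_def)
  have swap_iff: "swap_c u = x \<longleftrightarrow> u = swap_c x" for u
    by (metis transpose_involutory)
  have "{v\<in>{1..n}. swap_odd_runs \<kappa> v = x} = {v\<in>Rest. \<kappa> v = x} \<union> {v\<in>Odd. \<kappa> v = swap_c x}"
    using fin(1) by (auto simp: Rest_def Odd_def swap_odd_runs_def swap_iff)
  then have lhs: "card {v\<in>{1..n}. swap_odd_runs \<kappa> v = x} =
      card {v\<in>Rest. \<kappa> v = x} + card {v\<in>Odd. \<kappa> v = swap_c x}"
    using fin by (simp add: card_Un_disjoint disjoint_iff)
  have "{v\<in>{1..n}. \<kappa> v = swap_c x} = {v\<in>Rest. \<kappa> v = swap_c x} \<union> {v\<in>Odd. \<kappa> v = swap_c x}"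
    using fin(1) by (auto simp: Rest_def)
  then have rhs: "card {v\<in>{1..n}. \<kappa> v = swap_c x} =
      card {v\<in>Rest. \<kappa> v = swap_c x} + card {v\<in>Odd. \<kappa> v = swap_c x}"
    using fin by (simp add: card_Un_disjoint disjoint_iff)
  have "card {v\<in>Rest. \<kappa> v = x} = card {v\<in>Rest. \<kappa> v = swap_c x}"
  proof (cases "x = c \<or> x = Suc c")
    case True
    have "{v\<in>Rest. \<kappa> v = y} = {v\<in>{v\<in>?H. \<not> odd_run ?H v}. \<kappa> v = y}" if "y = c \<or> y = Suc c" for y
      using that by (auto simp: Rest_def Odd_def bicolored_def)
    then show ?thesis
      using True even_runs_balanced[OF proper] by auto
  qed simp
  with lhs rhs show ?thesis
    by simp
qed

lemma inner_ascents_eq: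
  assumes proper: "proper_coloring {1..n} (inc_edges n m) \<kappa>"
  defines "H \<equiv> bicolored \<kappa>"
  shows "{e\<in>inc_edges n m. e \<subseteq> H \<and> ascent \<kappa> e} =
         (\<lambda>y. {y, next_in H y}) ` {y\<in>H. y \<noteq> run_max H y \<and> \<kappa> y = c}"
proof (intro set_eqI iffI)
  have fin: "finite H"
    unfolding H_def by (rule finite_bicolored)
  fix e
  assume e: "e \<in> {e\<in>inc_edges n m. e \<subseteq> H \<and> ascent \<kappa> e}"
  then obtain i j where ij: "e = {i, j}" "inc_adj n m i j"
    unfolding inc_edges_eq by blast
  have H_ij: "i \<in> H" "j \<in> H" "i < j"
    using e ij by (auto simp: inc_adj_def)
  then have "\<kappa> i = c"
    using e ij ascent_doubleton[OF H_ij(3)] bicolored_color[of i \<kappa>] bicolored_color[of j \<kappa>]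
    unfolding H_def by auto
  moreover have "next_in H i = j"
    using next_in_bicolored[OF proper] H_ij ij(2) unfolding H_def by simp
  moreover have "j \<le> run_max H i"
    using run_bounds(3)[OF fin H_ij(1)] linked_if_inc_adj[OF H_ij(1,2) ij(2)] H_ij(2)
    by (simp add: mem_run_iff)
  ultimately show "e \<in> (\<lambda>y. {y, next_in H y}) ` {y\<in>H. y \<noteq> run_max H y \<and> \<kappa> y = c}"
    using ij(1) H_ij by (intro image_eqI[where x = i]) auto
next
  fix e
  assume "e \<in> (\<lambda>y. {y, next_in H y}) ` {y\<in>H. y \<noteq> run_max H y \<and> \<kappa> y = c}"
  then obtain y where y: "e = {y, next_in H y}" "y \<in> H" "y \<noteq> run_max H y" "\<kappa> y = c"
    by blast
  note z = next_in_run[OF finite_bicolored y(2,3)[unfolded H_def], folded H_def]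
  then have "\<kappa> (next_in H y) = Suc c"
    using proper_coloring_inc_adj[OF proper] bicolored_color y(4) unfolding H_def mem_run_iff
    by metis
  then show "e \<in> {e\<in>inc_edges n m. e \<subseteq> H \<and> ascent \<kappa> e}"
    using y z ascent_doubleton[of y "next_in H y" \<kappa>] unfolding inc_edges_eq mem_run_iff by auto
qed

lemma card_inner_ascents:
  assumes proper: "proper_coloring {1..n} (inc_edges n m) \<kappa>"
  defines "H \<equiv> bicolored \<kappa>"
  shows "card {e\<in>inc_edges n m. e \<subseteq> H \<and> ascent \<kappa> e} = card {y\<in>H. y \<noteq> run_max H y \<and> \<kappa> y = c}"
proof -
  have "inj_on (\<lambda>y. {y, next_in H y}) {y\<in>H. y \<noteq> run_max H y \<and> \<kappa> y = c}"
  proof (rule inj_onI)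
    fix y y' assume "y \<in> {y\<in>H. y \<noteq> run_max H y \<and> \<kappa> y = c}"
      "y' \<in> {y\<in>H. y \<noteq> run_max H y \<and> \<kappa> y = c}" "{y, next_in H y} = {y', next_in H y'}"
    then show "y = y'"
      using next_in_run(2)[OF finite_bicolored, of y \<kappa>] next_in_run(2)[OF finite_bicolored, of y' \<kappa>]
      unfolding H_def by (auto simp: doubleton_eq_iff)
  qed
  then show ?thesis
    unfolding H_def inner_ascents_eq[OF proper] by (simp add: card_image)
qed

lemma outer_ascents_swap_odd_runs:
  "{e\<in>inc_edges n m. \<not> e \<subseteq> bicolored \<kappa> \<and> ascent (swap_odd_runs \<kappa>) e} =
   {e\<in>inc_edges n m. \<not> e \<subseteq> bicolored \<kappa> \<and> ascent \<kappa> e}"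
proof (intro Collect_cong conj_cong refl)
  let ?H = "bicolored \<kappa>"
  fix e assume e: "e \<in> inc_edges n m" "\<not> e \<subseteq> ?H"
  then obtain i j where ij: "e = {i, j}" "inc_adj n m i j"
    unfolding inc_edges_eq by blast
  then have "i < j" "i \<in> {1..n}" "j \<in> {1..n}"
    by (auto simp: inc_adj_def)
  have outside: "swap_odd_runs \<kappa> v = \<kappa> v" "\<kappa> v \<noteq> c" "\<kappa> v \<noteq> Suc c"
    if "v \<in> {1..n}" "v \<notin> ?H" for v
    using that by (auto simp: swap_odd_runs_outside bicolored_def)
  have inside: "swap_odd_runs \<kappa> v \<in> {c, Suc c}" "\<kappa> v \<in> {c, Suc c}" if "v \<in> ?H" for v
    using that swap_odd_runs_bicolored bicolored_color by auto
  have "swap_odd_runs \<kappa> i < swap_odd_runs \<kappa> j \<longleftrightarrow> \<kappa> i < \<kappa> j"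
  proof (cases "i \<in> ?H"; cases "j \<in> ?H")
    assume "i \<in> ?H" "j \<in> ?H"
    then show ?thesis
      using e ij by auto
  next
    assume "i \<in> ?H" "j \<notin> ?H"
    then show ?thesis
      using inside[of i] outside[of j] \<open>j \<in> {1..n}\<close> by auto
  next
    assume "i \<notin> ?H" "j \<in> ?H"
    then show ?thesis
      using inside[of j] outside[of i] \<open>i \<in> {1..n}\<close> by auto
  next
    assume "i \<notin> ?H" "j \<notin> ?H"
    then show ?thesis
      using outside \<open>i \<in> {1..n}\<close> \<open>j \<in> {1..n}\<close> by simp
  qed
  then show "ascent (swap_odd_runs \<kappa>) e \<longleftrightarrow> ascent \<kappa> e"
    using ij(1) ascent_doubleton[OF \<open>i < j\<close>] by simp
qed

lemma card_run_starts_swap_odd_runs: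
  assumes proper: "proper_coloring {1..n} (inc_edges n m) \<kappa>"
  defines "H \<equiv> bicolored \<kappa>"
  shows "card {y\<in>H. y \<noteq> run_max H y \<and> swap_odd_runs \<kappa> y = c} =
         card {y\<in>H. y \<noteq> run_max H y \<and> \<kappa> y = c}"
proof -
  define D0 where "D0 = {y\<in>H. y \<noteq> run_max H y \<and> \<not> odd_run H y}"
  define D1 where "D1 = {y\<in>H. y \<noteq> run_max H y \<and> odd_run H y}"
  have fin: "finite D0" "finite D1" "D0 \<inter> D1 = {}"
    using finite_bicolored unfolding D0_def D1_def H_def by auto
  have "{y\<in>H. y \<noteq> run_max H y \<and> swap_odd_runs \<kappa> y = c} =
      {y\<in>D0. \<kappa> y = c} \<union> {y\<in>D1. \<kappa> y = Suc c}"
    using bicolored_color unfolding D0_def D1_def swap_odd_runs_def H_def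
    by (auto simp: Transposition.transpose_def)
  then have lhs: "card {y\<in>H. y \<noteq> run_max H y \<and> swap_odd_runs \<kappa> y = c} =
      card {y\<in>D0. \<kappa> y = c} + card {y\<in>D1. \<kappa> y = Suc c}"
    using fin by (simp add: card_Un_disjoint disjoint_iff)
  have "{y\<in>H. y \<noteq> run_max H y \<and> \<kappa> y = c} = {y\<in>D0. \<kappa> y = c} \<union> {y\<in>D1. \<kappa> y = c}"
    unfolding D0_def D1_def by auto
  then have rhs: "card {y\<in>H. y \<noteq> run_max H y \<and> \<kappa> y = c} =
      card {y\<in>D0. \<kappa> y = c} + card {y\<in>D1. \<kappa> y = c}"
    using fin by (simp add: card_Un_disjoint disjoint_iff)
  have "card {y\<in>D1. \<kappa> y = c} = card {y\<in>D1. \<kappa> y = Suc c}"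
    using odd_runs_balanced[OF proper] unfolding D1_def H_def .
  with lhs rhs show ?thesis
    by simp
qed

lemma asc_swap_odd_runs:
  assumes proper: "proper_coloring {1..n} (inc_edges n m) \<kappa>"
  shows "asc (inc_edges n m) (swap_odd_runs \<kappa>) = asc (inc_edges n m) \<kappa>"
proof -
  let ?E = "inc_edges n m" and ?H = "bicolored \<kappa>"
  have split: "asc ?E \<kappa>' = card {e\<in>?E. e \<subseteq> ?H \<and> ascent \<kappa>' e} + card {e\<in>?E. \<not> e \<subseteq> ?H \<and> ascent \<kappa>' e}"
    for \<kappa>'
  proof -
    have "{e\<in>?E. ascent \<kappa>' e} = {e\<in>?E. e \<subseteq> ?H \<and> ascent \<kappa>' e} \<union> {e\<in>?E. \<not> e \<subseteq> ?H \<and> ascent \<kappa>' e}"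
      by auto
    then show ?thesis
      unfolding asc_eq_card_ascents by (simp add: card_Un_disjoint finite_inc_edges disjoint_iff)
  qed
  have "card {e\<in>?E. e \<subseteq> ?H \<and> ascent (swap_odd_runs \<kappa>) e} =
      card {y\<in>?H. y \<noteq> run_max ?H y \<and> swap_odd_runs \<kappa> y = c}"
    using card_inner_ascents[OF proper_swap_odd_runs[OF proper]] by simp
  also have "\<dots> = card {y\<in>?H. y \<noteq> run_max ?H y \<and> \<kappa> y = c}"
    by (rule card_run_starts_swap_odd_runs[OF proper])
  also have "\<dots> = card {e\<in>?E. e \<subseteq> ?H \<and> ascent \<kappa> e}"
    by (rule card_inner_ascents[OF proper, symmetric])
  finally show ?thesis
    using split outer_ascents_swap_odd_runs by simp
qed

lemma swap_odd_runs_mem: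
  assumes "\<kappa> \<in> proper_colorings {1..n} (inc_edges n m) \<alpha>"
  shows "swap_odd_runs \<kappa> \<in> proper_colorings {1..n} (inc_edges n m) (\<alpha> \<circ> swap_c)"
  using assms proper_swap_odd_runs card_swap_odd_runs unfolding proper_colorings_def by simp

lemma chrom_qsym_swap_colors:
  "chrom_qsym {1..n} (inc_edges n m) (\<alpha> \<circ> swap_c) = chrom_qsym {1..n} (inc_edges n m) \<alpha>"
  unfolding chrom_qsym_eq
proof (rule sum.reindex_bij_witness[of _ swap_odd_runs swap_odd_runs])
  fix \<kappa> assume "\<kappa> \<in> proper_colorings {1..n} (inc_edges n m) (\<alpha> \<circ> swap_c)"
  then show "swap_odd_runs \<kappa> \<in> proper_colorings {1..n} (inc_edges n m) \<alpha>"
    using swap_odd_runs_mem[of \<kappa> "\<alpha> \<circ> swap_c"] by (simp add: comp_def)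
  show "monom 1 (asc (inc_edges n m) (swap_odd_runs \<kappa>)) = monom 1 (asc (inc_edges n m) \<kappa>)"
    using asc_swap_odd_runs \<open>\<kappa> \<in> _\<close> unfolding proper_colorings_def by simp
next
  fix \<kappa> assume "\<kappa> \<in> proper_colorings {1..n} (inc_edges n m) \<alpha>"
  then show "swap_odd_runs \<kappa> \<in> proper_colorings {1..n} (inc_edges n m) (\<alpha> \<circ> swap_c)"
    by (rule swap_odd_runs_mem)
qed simp_all

end

lemma chrom_qsym_transpose_colors:
  assumes "nuio n m" "1 \<le> c"
  shows "chrom_qsym {1..n} (inc_edges n m) (\<alpha> \<circ> Transposition.transpose c (Suc c)) =
         chrom_qsym {1..n} (inc_edges n m) \<alpha>"
proof -
  interpret nuio_color_swap n m c
    using assms by unfold_locales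
  show ?thesis
    by (rule chrom_qsym_swap_colors)
qed

definition cycle_up :: "nat \<Rightarrow> nat \<Rightarrow> nat" where
  "cycle_up N d = (if 1 \<le> d \<and> d \<le> N then d + 1 else if d = N + 1 then 1 else d)"

lemma cycle_up_0: "cycle_up 0 = id"
  by (auto simp: cycle_up_def)

lemma cycle_up_Suc: "cycle_up (Suc N) = cycle_up N \<circ> Transposition.transpose (Suc N) (Suc (Suc N))"
  by (auto simp: fun_eq_iff cycle_up_def Transposition.transpose_def)

lemma flip_0: "flip 0 = id"
  by (auto simp: flip_def)

lemma flip_Suc: "flip (Suc N) = cycle_up N \<circ> flip N"
  by (auto simp: fun_eq_iff cycle_up_def flip_def)

lemma invariant_under_flip:
  assumes "\<And>\<alpha> c. 1 \<le> c \<Longrightarrow> F (\<alpha> \<circ> Transposition.transpose c (Suc c)) = F \<alpha>"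
  shows "F (\<alpha> \<circ> flip N) = F \<alpha>"
proof -
  have cycle: "F (\<alpha> \<circ> cycle_up N) = F \<alpha>" for \<alpha> N
  proof (induction N arbitrary: \<alpha>)
    case (Suc N)
    have "F (\<alpha> \<circ> cycle_up (Suc N)) = F (\<alpha> \<circ> cycle_up N \<circ> Transposition.transpose (Suc N) (Suc (Suc N)))"
      by (simp add: cycle_up_Suc comp_assoc)
    also have "\<dots> = F (\<alpha> \<circ> cycle_up N)"
      by (rule assms) simp
    also have "\<dots> = F \<alpha>"
      by (rule Suc.IH)
    finally show ?case .
  qed (simp add: cycle_up_0)
  show ?thesis
  proof (induction N arbitrary: \<alpha>)
    case (Suc N)
    have "F (\<alpha> \<circ> flip (Suc N)) = F (\<alpha> \<circ> cycle_up N \<circ> flip N)"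
      by (simp add: flip_Suc comp_assoc)
    also have "\<dots> = F (\<alpha> \<circ> cycle_up N)"
      by (rule Suc.IH)
    also have "\<dots> = F \<alpha>"
      by (rule cycle)
    finally show ?case .
  qed (simp add: flip_0)
qed

lemma chrom_qsym_flip_colors:
  assumes "nuio n m"
  shows "chrom_qsym {1..n} (inc_edges n m) (\<alpha> \<circ> flip N) = chrom_qsym {1..n} (inc_edges n m) \<alpha>"
  using invariant_under_flip chrom_qsym_transpose_colors[OF assms] by metis

theorem lemma2p17:
  fixes n :: nat and m m' :: "nat \<Rightarrow> nat"
  assumes "nuio n m" and "nuio n m'"
    and "catalan_path n m' = reflect_path (catalan_path n m)"
  shows "chrom_qsym (inc_vertices n) (inc_edges n m) =
         chrom_qsym (inc_vertices n) (inc_edges n m')"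
proof
  fix \<alpha>
  let ?E = "inc_edges n m"
  have E': "inc_edges n m' = (`) (flip n) ` ?E"
    using inc_edges_reflect[OF assms] .
  show "chrom_qsym (inc_vertices n) ?E \<alpha> = chrom_qsym (inc_vertices n) (inc_edges n m') \<alpha>"
  proof (cases "\<exists>N. \<forall>x>N. \<alpha> x = 0")
    case True
    then obtain N where N: "\<forall>x>N. (\<alpha> \<circ> flip N) x = 0"
      by (auto simp: flip_def)
    have "chrom_qsym {1..n} ?E \<alpha> = chrom_qsym {1..n} ?E (\<alpha> \<circ> flip N)"
      by (rule chrom_qsym_flip_colors[OF assms(1), symmetric])
    also have "\<dots> = chrom_qsym {1..n} ((`) (flip n) ` ?E) (\<alpha> \<circ> flip N \<circ> flip N)"
      using chrom_qsym_flip[OF _ N] inc_edges_subset by metis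
    finally show ?thesis
      by (simp add: E' inc_vertices_def comp_def)
  next
    case False
    then show ?thesis
      by (simp add: chrom_qsym_eq proper_colorings_empty inc_vertices_def)
  qed
qed

end
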